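(* Let $T$ be a word in the letters $a,b$ of Type I or of Type II. Then $\mathcal{Z}(T)>\tfrac13$ if and only if $\mathcal{Z}(\overline{U}(T))>\tfrac13$, and $\mathcal{Z}(T)>\tfrac13$ if and only if $\mathcal{Z}(\overline{V}(T))>\tfrac13$.
   Context: A chain is a finite sequence $T=[a_1\dots a_n]$ of positive integers; for such $T$ define $\mathcal{Z}(T)=\big(\max_{1\le i\le n}([a_i;a_{i+1},\dots,a_n]+[0;a_{i-1},\dots,a_1])\big)^{-1}$ (finite continued fractions; for $i=1$ the second summand is $0$). Write $a=[22]$ and $b=[11]$; a finite word in the letters $a,b$ is identified with the chain obtained by concatenation. A word is of Type I if it equals $b^{e_1}ab^{e_2}a\cdots ab^{e_n}$ and of Type II if it equals $ba^{e_1}ba^{e_2}b\cdots ba^{e_n}b$, for some $n\ge1$ and integers $e_i\ge1$. The Nielsen moves are the substitutions $U:a\mapsto ab,\ b\mapsto b$ and $V:a\mapsto a,\ b\mapsto ab$ applied letterwise to finite words. For a word $T$ define $\overline{U}(T)=b\,U(T)$ and, when $T$ begins with $b$ (so $V(T)$ begins with $a$), $\overline{V}(T)=a^{-1}V(T)$, the word $V(T)$ with its first letter $a$ deleted. *)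

theory Defs
  imports Complex_Main
begin

fun cf0 :: "nat list \<Rightarrow> real" where
  "cf0 [] = 0"
| "cf0 (x # xs) = 1 / (real x + cf0 xs)"

text \<open>A chain is a list of positive integers. For position i (0-based) the summand is
  [a_i; a_{i+1},...,a_n] + [0; a_{i-1},...,a_1].\<close>
definition chain_term :: "nat list \<Rightarrow> nat \<Rightarrow> real" where
  "chain_term T i = real (T ! i) + cf0 (drop (Suc i) T) + cf0 (rev (take i T))"

definition Zc :: "nat list \<Rightarrow> real" where
  "Zc T = inverse (Max (chain_term T ` {..<length T}))"

datatype letter = LA | LB

definition chain_of :: "letter list \<Rightarrow> nat list" where
  "chain_of w = concat (map (\<lambda>l. case l of LA \<Rightarrow> [2,2] | LB \<Rightarrow> [1,1]) w)"

definition Zw :: "letter list \<Rightarrow> real" where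
  "Zw w = Zc (chain_of w)"

text \<open>Type I: b^{e_1} a b^{e_2} a ... a b^{e_n}.\<close>
definition typeI :: "letter list \<Rightarrow> bool" where
  "typeI w \<longleftrightarrow> (\<exists>e1 es. e1 \<ge> 1 \<and> (\<forall>e\<in>set es. e \<ge> 1) \<and>
      w = replicate e1 LB @ concat (map (\<lambda>e. LA # replicate e LB) es))"

text \<open>Type II: b a^{e_1} b a^{e_2} b ... b a^{e_n} b.\<close>
definition typeII :: "letter list \<Rightarrow> bool" where
  "typeII w \<longleftrightarrow> (\<exists>es. es \<noteq> [] \<and> (\<forall>e\<in>set es. e \<ge> 1) \<and>
      w = LB # concat (map (\<lambda>e. replicate e LA @ [LB]) es))"

definition nielsenU :: "letter list \<Rightarrow> letter list" where
  "nielsenU w = concat (map (\<lambda>l. case l of LA \<Rightarrow> [LA, LB] | LB \<Rightarrow> [LB]) w)"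

definition nielsenV :: "letter list \<Rightarrow> letter list" where
  "nielsenV w = concat (map (\<lambda>l. case l of LA \<Rightarrow> [LA] | LB \<Rightarrow> [LA, LB]) w)"

definition Ubar :: "letter list \<Rightarrow> letter list" where
  "Ubar w = LB # nielsenU w"

text \<open>Only meaningful when w begins with b; then V(w) begins with a, which is deleted.\<close>
definition Vbar :: "letter list \<Rightarrow> letter list" where
  "Vbar w = tl (nielsenV w)"

end

theory Submission
  imports Defs "HOL-Library.List_Lexorder"
begin

text \<open>
  Z(T) > 1/3 means that every term of the chain is below 3. Terms at a digit 1 always are.
  At the first digit of a letter a with prefix P and suffix S the condition
  2 + [0;2,S] + [0;P reversed] < 3 says [0;rev P] < 1 - [0;2,S] = [0;b S], and the continued
  fraction of a word is strictly increasing for the lexicographic order with a < b (every letter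
  contributes two equal digits, so the order reversals of the continued fraction cancel).
  Hence Z(T) > 1/3 iff at every a of T = P a S both rev P < b S and S < b rev P. The Nielsen
  moves are strictly monotone for this order and compatible with reversal, which makes the
  condition invariant under Ubar and, for words beginning with b (as words of Type I and II
  do), under Vbar.
\<close>

instantiation letter :: linorder
begin

definition less_eq_letter :: "letter \<Rightarrow> letter \<Rightarrow> bool" where
  "l \<le> l' \<longleftrightarrow> l = LA \<or> l' = LB"

definition less_letter :: "letter \<Rightarrow> letter \<Rightarrow> bool" where
  "l < l' \<longleftrightarrow> l = LA \<and> l' = LB"

instance
  by standard (auto simp: less_eq_letter_def less_letter_def intro: letter.exhaust)

end

lemma less_letter_simps [simp]: "LA < LB" "\<not> LB < l" "\<not> l < LA"
  by (auto simp: less_letter_def)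

lemma nielsenU_simps [simp]:
  "nielsenU [] = []" "nielsenU (LA # w) = LA # LB # nielsenU w"
  "nielsenU (LB # w) = LB # nielsenU w" "nielsenU (u @ w) = nielsenU u @ nielsenU w"
  by (auto simp: nielsenU_def)

lemma nielsenV_simps [simp]:
  "nielsenV [] = []" "nielsenV (LA # w) = LA # nielsenV w"
  "nielsenV (LB # w) = LA # LB # nielsenV w" "nielsenV (u @ w) = nielsenV u @ nielsenV w"
  by (auto simp: nielsenV_def)

lemma strict_mono_nielsenU: "strict_mono nielsenU"
proof (rule strict_monoI)
  show "nielsenU u < nielsenU w" if "u < w" for u w
    using that
  proof (induction u arbitrary: w)
    case Nil
    then obtain l w' where "w = l # w'" by (cases w) auto
    then show ?case by (cases l) auto
  next
    case (Cons l u)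
    then obtain l' w' where "w = l' # w'" by (cases w) auto
    with Cons show ?case by (cases l; cases l') auto
  qed
qed

lemma nielsenV_less_LB_Cons: "nielsenV w < LB # u"
proof (cases w)
  case (Cons l w')
  then show ?thesis by (cases l) auto
qed simp

lemma strict_mono_nielsenV: "strict_mono nielsenV"
proof (rule strict_monoI)
  show "nielsenV u < nielsenV w" if "u < w" for u w
    using that
  proof (induction u arbitrary: w)
    case Nil
    then obtain l w' where "w = l # w'" by (cases w) auto
    then show ?case by (cases l) auto
  next
    case (Cons l u)
    then obtain l' w' where "w = l' # w'" by (cases w) auto
    with Cons show ?case by (cases l; cases l') (auto simp: nielsenV_less_LB_Cons)
  qed
qed

lemma rev_nielsenU: "rev (nielsenU w) @ [LB] = LB # nielsenU (rev w)"
proof (induction w)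
  case (Cons l w)
  then show ?case by (cases l) simp_all
qed simp

lemma nielsenV_rev: "nielsenV (rev w) @ [LA] = LA # rev (nielsenV w)"
proof (induction w)
  case (Cons l w)
  have "nielsenV (rev w) @ LA # u = LA # rev (nielsenV w) @ u" for u
    using Cons.IH by (metis append.assoc append_Cons append_Nil)
  then show ?case by (cases l) simp_all
qed simp

lemma nielsenU_eq_append_LA_iff:
  "nielsenU w = X @ LA # Y \<longleftrightarrow> (\<exists>P S. w = P @ LA # S \<and> X = nielsenU P \<and> Y = LB # nielsenU S)"
proof
  show "nielsenU w = X @ LA # Y \<Longrightarrow> \<exists>P S. w = P @ LA # S \<and> X = nielsenU P \<and> Y = LB # nielsenU S"
  proof (induction w arbitrary: X)
    case (Cons l w)
    show ?case
    proof (cases "X = []")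
      case True
      with Cons.prems have "l = LA" "Y = LB # nielsenU w" by (cases l; simp)+
      with True have "l # w = [] @ LA # w \<and> X = nielsenU [] \<and> Y = LB # nielsenU w" by simp
      then show ?thesis by blast
    next
      case False
      then obtain X' where X': "X = nielsenU [l] @ X'" "nielsenU w = X' @ LA # Y"
        using Cons.prems by (cases l; cases X; cases "tl X") auto
      from Cons.IH[OF X'(2)] obtain P S
        where "w = P @ LA # S" "X' = nielsenU P" "Y = LB # nielsenU S" by blast
      with X'(1) have "l # w = (l # P) @ LA # S \<and> X = nielsenU (l # P) \<and> Y = LB # nielsenU S"
        by (cases l) simp_all
      then show ?thesis by blast
    qed
  qed simp
qed auto

lemma nielsenV_eq_append_LA_iff:
  "nielsenV w = X @ LA # Y \<longleftrightarrow>
   (\<exists>P S. w = P @ LA # S \<and> X = nielsenV P \<and> Y = nielsenV S) \<or>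
   (\<exists>P S. w = P @ LB # S \<and> X = nielsenV P \<and> Y = LB # nielsenV S)"
proof
  show "nielsenV w = X @ LA # Y \<Longrightarrow>
   (\<exists>P S. w = P @ LA # S \<and> X = nielsenV P \<and> Y = nielsenV S) \<or>
   (\<exists>P S. w = P @ LB # S \<and> X = nielsenV P \<and> Y = LB # nielsenV S)"
  proof (induction w arbitrary: X)
    case (Cons l w)
    show ?case
    proof (cases "X = []")
      case True
      show ?thesis
      proof (cases l)
        case LA
        with True Cons.prems have "l # w = [] @ LA # w \<and> X = nielsenV [] \<and> Y = nielsenV w"
          by simp
        then show ?thesis by blast
      next
        case LB
        with True Cons.prems have "l # w = [] @ LB # w \<and> X = nielsenV [] \<and> Y = LB # nielsenV w"
          by simp
        then show ?thesis by blast
      qed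
    next
      case False
      then obtain X' where X': "X = nielsenV [l] @ X'" "nielsenV w = X' @ LA # Y"
        using Cons.prems by (cases l; cases X; cases "tl X") auto
      from Cons.IH[OF X'(2)] show ?thesis
      proof (elim disjE exE conjE)
        fix P S assume "w = P @ LA # S" "X' = nielsenV P" "Y = nielsenV S"
        with X'(1) have "l # w = (l # P) @ LA # S \<and> X = nielsenV (l # P) \<and> Y = nielsenV S"
          by (cases l) simp_all
        then show ?thesis by blast
      next
        fix P S assume "w = P @ LB # S" "X' = nielsenV P" "Y = LB # nielsenV S"
        with X'(1) have "l # w = (l # P) @ LB # S \<and> X = nielsenV (l # P) \<and> Y = LB # nielsenV S"
          by (cases l) simp_all
        then show ?thesis by blast
      qed
    qed
  qed simp
qed auto

definition lex_balanced :: "letter list \<Rightarrow> bool" where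
  "lex_balanced w \<longleftrightarrow> (\<forall>P S. w = P @ LA # S \<longrightarrow> rev P < LB # S \<and> S < LB # rev P)"

lemma lex_balanced_LB_Cons:
  "lex_balanced (LB # w) \<longleftrightarrow>
   (\<forall>P S. w = P @ LA # S \<longrightarrow> rev P @ [LB] < LB # S \<and> S < LB # rev P @ [LB])"
proof -
  have LB_Cons_eq: "LB # w = P' @ LA # S \<longleftrightarrow> (\<exists>P. P' = LB # P \<and> w = P @ LA # S)" for P' S
    by (cases P') auto
  have "lex_balanced (LB # w) \<longleftrightarrow>
      (\<forall>P S. w = P @ LA # S \<longrightarrow> rev (LB # P) < LB # S \<and> S < LB # rev (LB # P))"
    unfolding lex_balanced_def LB_Cons_eq by blast
  then show ?thesis by simp
qed

lemma lex_balanced_Ubar: "lex_balanced (Ubar w) \<longleftrightarrow> lex_balanced w"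
proof -
  have "lex_balanced (Ubar w) \<longleftrightarrow> (\<forall>P S. w = P @ LA # S \<longrightarrow>
      rev (nielsenU P) @ [LB] < LB # LB # nielsenU S \<and>
      LB # nielsenU S < LB # rev (nielsenU P) @ [LB])"
    unfolding Ubar_def lex_balanced_LB_Cons nielsenU_eq_append_LA_iff by blast
  also have "\<dots> \<longleftrightarrow> (\<forall>P S. w = P @ LA # S \<longrightarrow>
      nielsenU (rev P) < nielsenU (LB # S) \<and> nielsenU S < nielsenU (LB # rev P))"
    by (simp add: rev_nielsenU)
  also have "\<dots> \<longleftrightarrow> lex_balanced w"
    by (simp only: lex_balanced_def strict_mono_less[OF strict_mono_nielsenU])
  finally show ?thesis .
qed

definition rev_prefixes_less :: "letter list \<Rightarrow> bool" where
  "rev_prefixes_less w \<longleftrightarrow> (\<forall>P S. w = P @ LA # S \<longrightarrow> rev P @ [LB] < LB # S)"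

definition suffixes_less :: "letter list \<Rightarrow> bool" where
  "suffixes_less w \<longleftrightarrow> (\<forall>P S. w = P @ LA # LB # S \<longrightarrow> S < rev P @ [LB])"

lemma lex_balanced_LB_Cons_iff: "lex_balanced (LB # w) \<longleftrightarrow> rev_prefixes_less w \<and> suffixes_less w"
proof -
  have "S < LB # rev P @ [LB] \<longleftrightarrow> (\<forall>S'. S = LB # S' \<longrightarrow> S' < rev P @ [LB])" for P S :: "letter list"
  proof (cases S)
    case (Cons l S')
    then show ?thesis by (cases l) auto
  qed simp
  then show ?thesis
    unfolding lex_balanced_LB_Cons rev_prefixes_less_def suffixes_less_def by auto
qed

lemma nielsenV_rev_snoc_LB: "nielsenV (rev P @ [LB]) = LA # rev (nielsenV P) @ [LB]"
  using nielsenV_rev[of P] by simp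

lemma rev_nielsenV_snoc_LB_less: "rev (nielsenV P) @ [LB] < LB # LB # u"
proof (cases P rule: rev_exhaust)
  case (snoc P' l)
  then show ?thesis by (cases l) auto
qed simp

lemma rev_prefixes_less_nielsenV: "rev_prefixes_less (nielsenV w) \<longleftrightarrow> rev_prefixes_less w"
proof -
  have "rev_prefixes_less (nielsenV w) \<longleftrightarrow>
      (\<forall>P S. w = P @ LA # S \<longrightarrow> rev (nielsenV P) @ [LB] < LB # nielsenV S)"
    unfolding rev_prefixes_less_def nielsenV_eq_append_LA_iff
    using rev_nielsenV_snoc_LB_less by blast
  also have "\<dots> \<longleftrightarrow> (\<forall>P S. w = P @ LA # S \<longrightarrow> nielsenV (rev P @ [LB]) < nielsenV (LB # S))"
    by (simp del: nielsenV_simps(4) add: nielsenV_rev_snoc_LB)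
  also have "\<dots> \<longleftrightarrow> rev_prefixes_less w"
    by (simp only: rev_prefixes_less_def strict_mono_less[OF strict_mono_nielsenV])
  finally show ?thesis .
qed

lemma nielsenV_eq_append_LA_LB_iff:
  "nielsenV w = X @ LA # LB # Y \<longleftrightarrow> (\<exists>P S. w = P @ LB # S \<and> X = nielsenV P \<and> Y = nielsenV S)"
proof
  assume "nielsenV w = X @ LA # LB # Y"
  moreover have "LB # Y \<noteq> nielsenV S" for S
    using nielsenV_less_LB_Cons[of S Y] by auto
  ultimately obtain P S where "w = P @ LB # S" "X = nielsenV P" "LB # Y = LB # nielsenV S"
    unfolding nielsenV_eq_append_LA_iff by blast
  then show "\<exists>P S. w = P @ LB # S \<and> X = nielsenV P \<and> Y = nielsenV S" by blast
qed auto

lemma nielsenV_less_rev_nielsenV_snoc_iff: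
  "nielsenV S < rev (nielsenV P) @ [LB] \<longleftrightarrow> (\<forall>P'. P = P' @ [LA] \<longrightarrow> S < rev P' @ [LB])"
proof (cases P rule: rev_exhaust)
  case Nil
  then show ?thesis by (simp add: nielsenV_less_LB_Cons)
next
  case (snoc P' l)
  show ?thesis
  proof (cases l)
    case LA
    have "nielsenV S < nielsenV (rev P' @ [LB]) \<longleftrightarrow> S < rev P' @ [LB]"
      by (rule strict_mono_less[OF strict_mono_nielsenV])
    then have "nielsenV S < LA # rev (nielsenV P') @ [LB] \<longleftrightarrow> S < rev P' @ [LB]"
      by (simp only: nielsenV_rev_snoc_LB)
    with snoc LA show ?thesis by simp
  next
    case LB
    with snoc show ?thesis by (simp add: nielsenV_less_LB_Cons)
  qed
qed

lemma suffixes_less_nielsenV: "suffixes_less (nielsenV w) \<longleftrightarrow> suffixes_less w"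
proof -
  have "suffixes_less (nielsenV w) \<longleftrightarrow>
      (\<forall>P S. w = P @ LB # S \<longrightarrow> nielsenV S < rev (nielsenV P) @ [LB])"
    unfolding suffixes_less_def nielsenV_eq_append_LA_LB_iff by blast
  also have "\<dots> \<longleftrightarrow> (\<forall>P S. w = P @ LB # S \<longrightarrow> (\<forall>P'. P = P' @ [LA] \<longrightarrow> S < rev P' @ [LB]))"
    by (simp only: nielsenV_less_rev_nielsenV_snoc_iff)
  also have "\<dots> \<longleftrightarrow> suffixes_less w"
    unfolding suffixes_less_def by auto
  finally show ?thesis .
qed

lemma lex_balanced_Vbar: "lex_balanced (Vbar (LB # w)) \<longleftrightarrow> lex_balanced (LB # w)"
  by (simp add: Vbar_def lex_balanced_LB_Cons_iff rev_prefixes_less_nielsenV suffixes_less_nielsenV)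

definition letter_digit :: "letter \<Rightarrow> nat" where
  "letter_digit l = (case l of LA \<Rightarrow> 2 | LB \<Rightarrow> 1)"

lemma letter_digit_simps [simp]: "letter_digit LA = 2" "letter_digit LB = 1"
  by (simp_all add: letter_digit_def)

lemma letter_digit_ge_1: "1 \<le> real (letter_digit l)"
  by (cases l) simp_all

lemma chain_of_simps [simp]:
  "chain_of [] = []" "chain_of (l # w) = letter_digit l # letter_digit l # chain_of w"
  "chain_of (u @ w) = chain_of u @ chain_of w"
  by (auto simp: chain_of_def letter_digit_def split: letter.split)

lemma rev_chain_of: "rev (chain_of w) = chain_of (rev w)"
  by (induction w) auto

lemma cf0_nonneg: "0 \<le> cf0 xs"
  by (induction xs) auto

definition word_cf :: "letter list \<Rightarrow> real" where
  "word_cf w = cf0 (chain_of w)"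

lemma word_cf_Nil [simp]: "word_cf [] = 0"
  by (simp add: word_cf_def)

lemma word_cf_Cons:
  "word_cf (l # w) = 1 / (real (letter_digit l) + 1 / (real (letter_digit l) + word_cf w))"
  by (simp add: word_cf_def)

lemma word_cf_nonneg: "0 \<le> word_cf w"
  by (simp add: word_cf_def cf0_nonneg)

lemma word_cf_Cons_pos: "0 < word_cf (l # w)"
  using word_cf_nonneg[of w] letter_digit_ge_1[of l]
  by (simp add: word_cf_Cons add_pos_nonneg)

lemma word_cf_less_1: "word_cf w < 1"
proof (cases w)
  case (Cons l w')
  have "0 < 1 / (real (letter_digit l) + word_cf w')"
    using word_cf_nonneg[of w'] letter_digit_ge_1[of l] by simp
  then have "1 < real (letter_digit l) + 1 / (real (letter_digit l) + word_cf w')"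
    using letter_digit_ge_1[of l] by linarith
  with Cons show ?thesis by (simp add: word_cf_Cons)
qed simp

lemma word_cf_LA_Cons_less_half: "word_cf (LA # w) < 1/2"
  using word_cf_nonneg[of w] by (simp add: word_cf_Cons field_simps)

lemma word_cf_LB_Cons_ge_half: "1/2 \<le> word_cf (LB # w)"
  using word_cf_nonneg[of w] by (simp add: word_cf_Cons field_simps)

lemma two_step_cf_strict_mono:
  fixes d z z' :: real
  assumes "1 \<le> d" "0 \<le> z" "z < z'"
  shows "1 / (d + 1 / (d + z)) < 1 / (d + 1 / (d + z'))"
proof -
  have "1 / (d + z') < 1 / (d + z)"
    using assms by (intro divide_strict_left_mono) auto
  moreover have "0 < d + 1 / (d + z')"
    using assms by (simp add: add_pos_nonneg)
  ultimately show ?thesis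
    by (intro divide_strict_left_mono) auto
qed

lemma strict_mono_word_cf: "strict_mono word_cf"
proof (rule strict_monoI)
  show "word_cf u < word_cf w" if "u < w" for u w
    using that
  proof (induction u arbitrary: w)
    case Nil
    then obtain l w' where "w = l # w'" by (cases w) auto
    then show ?case by (simp add: word_cf_Cons_pos)
  next
    case (Cons l u)
    then obtain l' w' where w: "w = l' # w'" by (cases w) auto
    show ?case
    proof (cases "l = l'")
      case True
      with Cons w have "word_cf u < word_cf w'" by simp
      then have "word_cf (l # u) < word_cf (l # w')"
        unfolding word_cf_Cons by (intro two_step_cf_strict_mono letter_digit_ge_1 word_cf_nonneg)
      with True w show ?thesis by simp
    next
      case False
      with Cons.prems w have "l = LA" "l' = LB" by (cases l; cases l'; simp)+
      with w show ?thesis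
        using word_cf_LA_Cons_less_half[of u] word_cf_LB_Cons_ge_half[of w'] by simp
    qed
  qed
qed

lemma chain_term_append_Cons: "chain_term (L @ x # R) (length L) = real x + cf0 R + cf0 (rev L)"
  by (simp add: chain_term_def)

lemma chain_terms_less_iff:
  "(\<forall>i<length T. chain_term T i < c) \<longleftrightarrow>
   (\<forall>L x R. T = L @ x # R \<longrightarrow> real x + cf0 R + cf0 (rev L) < c)"
proof
  assume terms: "\<forall>i<length T. chain_term T i < c"
  show "\<forall>L x R. T = L @ x # R \<longrightarrow> real x + cf0 R + cf0 (rev L) < c"
  proof (intro allI impI)
    fix L x R assume T: "T = L @ x # R"
    then have "chain_term T (length L) < c" using terms by simp
    with T show "real x + cf0 R + cf0 (rev L) < c" by (simp only: chain_term_append_Cons)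
  qed
next
  assume splits: "\<forall>L x R. T = L @ x # R \<longrightarrow> real x + cf0 R + cf0 (rev L) < c"
  show "\<forall>i<length T. chain_term T i < c"
  proof (intro allI impI)
    fix i assume "i < length T"
    then have "T = take i T @ T ! i # drop (Suc i) T" by (rule id_take_nth_drop)
    with splits show "chain_term T i < c" unfolding chain_term_def by blast
  qed
qed

lemma Zc_gt_third_iff:
  assumes "T \<noteq> []" and "\<forall>x\<in>set T. 0 < x"
  shows "1/3 < Zc T \<longleftrightarrow> (\<forall>L x R. T = L @ x # R \<longrightarrow> real x + cf0 R + cf0 (rev L) < 3)"
proof -
  let ?terms = "chain_term T ` {..<length T}"
  have finite: "finite ?terms" and nonempty: "?terms \<noteq> {}"
    using assms(1) by auto
  have "0 < real (T ! 0)"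
    using assms by (simp add: hd_conv_nth[symmetric])
  then have "0 < chain_term T 0"
    by (simp add: chain_term_def cf0_nonneg add_pos_nonneg)
  also have "\<dots> \<le> Max ?terms"
    using finite assms(1) by (intro Max_ge) auto
  finally have "1/3 < Zc T \<longleftrightarrow> Max ?terms < 3"
    by (simp add: Zc_def field_simps)
  also have "\<dots> \<longleftrightarrow> (\<forall>i<length T. chain_term T i < 3)"
    using finite nonempty by (auto simp: Max_less_iff)
  finally show ?thesis
    by (simp only: chain_terms_less_iff)
qed

lemma chain_of_eq_append_Cons:
  assumes "chain_of w = L @ x # R"
  obtains P l S where "w = P @ l # S" "x = letter_digit l"
    "L = chain_of P" "R = letter_digit l # chain_of S"
  | P l S where "w = P @ l # S" "x = letter_digit l"
    "L = chain_of P @ [letter_digit l]" "R = chain_of S"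
  using assms
proof (induction w arbitrary: L thesis)
  case (Cons l w)
  show ?case
  proof (cases L)
    case Nil
    with Cons.prems(3) show ?thesis by (intro Cons.prems(1)[of "[]" l w]) auto
  next
    case (Cons y L')
    show ?thesis
    proof (cases L')
      case Nil
      with Cons.prems(3) \<open>L = y # L'\<close> show ?thesis by (intro Cons.prems(2)[of "[]" l w]) auto
    next
      case (Cons z L'')
      with Cons.prems(3) \<open>L = y # L'\<close> have tail: "chain_of w = L'' @ x # R" by simp
      show ?thesis
      proof (rule Cons.IH[of L''])
        show ?thesis if "w = P @ l' # S" "x = letter_digit l'" "L'' = chain_of P"
          "R = letter_digit l' # chain_of S" for P l' S
          using that Cons.prems(3) \<open>L = y # L'\<close> \<open>L' = z # L''\<close>
          by (intro Cons.prems(1)[of "l # P" l' S]) auto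
        show ?thesis if "w = P @ l' # S" "x = letter_digit l'"
          "L'' = chain_of P @ [letter_digit l']" "R = chain_of S" for P l' S
          using that Cons.prems(3) \<open>L = y # L'\<close> \<open>L' = z # L''\<close>
          by (intro Cons.prems(2)[of "l # P" l' S]) auto
      qed (fact tail)
    qed
  qed
qed simp

text \<open>The chain term at the first digit of l in chain_of (rev Q @ l # S); by symmetry,
  letter_term S l Q is the term at its second digit.\<close>

definition letter_term :: "letter list \<Rightarrow> letter \<Rightarrow> letter list \<Rightarrow> real" where
  "letter_term Q l S = real (letter_digit l) + cf0 (letter_digit l # chain_of S) + word_cf Q"

lemma chain_of_terms_less_iff:
  "(\<forall>L x R. chain_of w = L @ x # R \<longrightarrow> real x + cf0 R + cf0 (rev L) < c) \<longleftrightarrow>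
   (\<forall>P l S. w = P @ l # S \<longrightarrow> letter_term (rev P) l S < c \<and> letter_term S l (rev P) < c)"
proof
  assume terms: "\<forall>L x R. chain_of w = L @ x # R \<longrightarrow> real x + cf0 R + cf0 (rev L) < c"
  show "\<forall>P l S. w = P @ l # S \<longrightarrow> letter_term (rev P) l S < c \<and> letter_term S l (rev P) < c"
  proof (intro allI impI)
    fix P l S assume w: "w = P @ l # S"
    let ?d = "letter_digit l"
    have "chain_of w = chain_of P @ ?d # (?d # chain_of S)"
      and "chain_of w = (chain_of P @ [?d]) @ ?d # chain_of S"
      using w by simp_all
    then have "real ?d + cf0 (?d # chain_of S) + cf0 (rev (chain_of P)) < c"
      and "real ?d + cf0 (chain_of S) + cf0 (rev (chain_of P @ [?d])) < c"
      using terms by blast+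
    then show "letter_term (rev P) l S < c \<and> letter_term S l (rev P) < c"
      by (simp add: letter_term_def word_cf_def rev_chain_of add_ac)
  qed
next
  assume letters: "\<forall>P l S. w = P @ l # S \<longrightarrow> letter_term (rev P) l S < c \<and> letter_term S l (rev P) < c"
  show "\<forall>L x R. chain_of w = L @ x # R \<longrightarrow> real x + cf0 R + cf0 (rev L) < c"
  proof (intro allI impI)
    fix L x R assume "chain_of w = L @ x # R"
    then show "real x + cf0 R + cf0 (rev L) < c"
    proof (rule chain_of_eq_append_Cons)
      fix P l S assume w: "w = P @ l # S" and "x = letter_digit l"
        and "L = chain_of P" "R = letter_digit l # chain_of S"
      moreover have "letter_term (rev P) l S < c" using letters w by blast
      ultimately show ?thesis by (simp add: letter_term_def word_cf_def rev_chain_of)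
    next
      fix P l S assume w: "w = P @ l # S" and "x = letter_digit l"
        and "L = chain_of P @ [letter_digit l]" "R = chain_of S"
      moreover have "letter_term S l (rev P) < c" using letters w by blast
      ultimately show ?thesis by (simp add: letter_term_def word_cf_def rev_chain_of add_ac)
    qed
  qed
qed

lemma letter_term_LA_less_3_iff: "letter_term Q LA S < 3 \<longleftrightarrow> Q < LB # S"
proof -
  have "word_cf (LB # S) = 1 - 1 / (2 + word_cf S)"
    using word_cf_nonneg[of S] by (simp add: word_cf_Cons field_simps)
  moreover have "letter_term Q LA S = 2 + 1 / (2 + word_cf S) + word_cf Q"
    by (simp add: letter_term_def word_cf_def)
  ultimately have "letter_term Q LA S < 3 \<longleftrightarrow> word_cf Q < word_cf (LB # S)"
    by linarith
  also have "\<dots> \<longleftrightarrow> Q < LB # S"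
    by (rule strict_mono_less[OF strict_mono_word_cf])
  finally show ?thesis .
qed

lemma letter_term_LB_less_3: "letter_term Q LB S < 3"
proof -
  have "1 / (1 + word_cf S) \<le> 1"
    using word_cf_nonneg[of S] by simp
  with word_cf_less_1[of Q] show ?thesis
    by (simp add: letter_term_def word_cf_def)
qed

lemma Zw_gt_third_iff:
  assumes "w \<noteq> []"
  shows "1/3 < Zw w \<longleftrightarrow> lex_balanced w"
proof -
  have "chain_of w \<noteq> []"
    using assms by (cases w) simp_all
  moreover have "\<forall>x\<in>set (chain_of w). 0 < x"
    by (induction w) (auto simp: letter_digit_def split: letter.split)
  ultimately have "1/3 < Zw w \<longleftrightarrow> (\<forall>L x R. chain_of w = L @ x # R \<longrightarrow> real x + cf0 R + cf0 (rev L) < 3)"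
    unfolding Zw_def by (rule Zc_gt_third_iff)
  also have "\<dots> \<longleftrightarrow>
      (\<forall>P l S. w = P @ l # S \<longrightarrow> letter_term (rev P) l S < 3 \<and> letter_term S l (rev P) < 3)"
    by (rule chain_of_terms_less_iff)
  also have "\<dots> \<longleftrightarrow> lex_balanced w"
  proof -
    have "letter_term (rev P) l S < 3 \<and> letter_term S l (rev P) < 3 \<longleftrightarrow>
        (l = LA \<longrightarrow> rev P < LB # S \<and> S < LB # rev P)" for P l S
      by (cases l) (simp_all add: letter_term_LA_less_3_iff letter_term_LB_less_3)
    then show ?thesis by (auto simp: lex_balanced_def)
  qed
  finally show ?thesis .
qed

lemma typeI_or_typeII_LB_Cons:
  assumes "typeI T \<or> typeII T"
  obtains w where "T = LB # w"
  using assms unfolding typeI_def typeII_def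
proof (elim disjE exE conjE)
  fix e1 es assume "1 \<le> e1" "T = replicate e1 LB @ concat (map (\<lambda>e. LA # replicate e LB) es)"
  then show thesis using that by (cases e1) simp_all
next
  fix es assume "T = LB # concat (map (\<lambda>e. replicate e LA @ [LB]) es)"
  then show thesis by (rule that)
qed

theorem proposition4p2:
  fixes T :: "letter list"
  assumes "typeI T \<or> typeII T"
  shows "(Zw T > 1/3 \<longleftrightarrow> Zw (Ubar T) > 1/3) \<and> (Zw T > 1/3 \<longleftrightarrow> Zw (Vbar T) > 1/3)"
proof -
  obtain w where T: "T = LB # w"
    using assms by (rule typeI_or_typeII_LB_Cons)
  have "1/3 < Zw T \<longleftrightarrow> lex_balanced T"
    by (rule Zw_gt_third_iff) (simp add: T)
  moreover have "1/3 < Zw (Ubar T) \<longleftrightarrow> lex_balanced T"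
    using Zw_gt_third_iff[of "Ubar T"] lex_balanced_Ubar[of T] by (simp add: Ubar_def)
  moreover have "1/3 < Zw (Vbar T) \<longleftrightarrow> lex_balanced T"
    using Zw_gt_third_iff[of "Vbar T"] lex_balanced_Vbar[of w] by (simp add: T Vbar_def)
  ultimately show ?thesis by blast
qed

end
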